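(* Assume $\Phi$ is convex. Let $\emptyset\neq S\subseteq\mathbb{S}\cap\{x\in\mathbb{R}^n\mid\langle x,u\rangle\ge\alpha\}$ for some $u\in\mathbb{R}^n$ with $\|u\|=1$ and some $\alpha>0$. Then $S$ is hull-addible and $$\operatorname{cl}(\operatorname{sco}S)=\bigcap\{C\subseteq\mathbb{S}\mid C\text{ nonempty, closed and s-convex},\ S\subseteq C\}.$$ Consequently, $\operatorname{cl}(\operatorname{sco}S)$ is the smallest closed s-convex subset of $\mathbb{S}$ containing $S$.
   Context: Standing setting: $n\ge 2$; $\mathbb{R}^n$ carries the usual inner product $\langle\cdot,\cdot\rangle$ and Euclidean norm $\|\cdot\|$; $o$ denotes the zero vector. $\Phi:\mathbb{R}^n\to\mathbb{R}_+:=[0,\infty)$ is a continuous function with $\Phi(tx)=t\Phi(x)$ for all $x\in\mathbb{R}^n$, $t\ge 0$, and $\Phi(x)=0$ iff $x=o$. Set $\mathbb{S}:=\{x\in\mathbb{R}^n\mid \Phi(x)=1\}$ (with the topology induced from $\mathbb{R}^n$), and $\rho:\mathbb{R}^n\to\{o\}\cup\mathbb{S}$, $\rho(x):=x/\Phi(x)$ for $x\neq o$, $\rho(o):=o$. For $x,y\in\mathbb{S}$, $\lambda\in[0,1]$, $\lambda x+_s(1-\lambda)y:=\rho(\lambda x+(1-\lambda)y)$. A nonempty set $S\subseteq\mathbb{S}$ is called s-convex if $\lambda x+_s(1-\lambda)y\in S$ for all $x,y\in S$ and $\lambda\in[0,1]$. A nonempty set $S\subseteq\mathbb{S}$ is hull-addible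 if $o\notin\operatorname{conv}S$; for such $S$, $\operatorname{sco}S:=\rho(\operatorname{conv}S)$. $\operatorname{cl}$ denotes closure in $\mathbb{R}^n$. *)

theory Defs
  imports "HOL-Analysis.Analysis"
begin

definition gauge_fun :: "('a::euclidean_space \<Rightarrow> real) \<Rightarrow> bool" where
  "gauge_fun \<Phi> \<longleftrightarrow> continuous_on UNIV \<Phi> \<and> (\<forall>x. \<Phi> x \<ge> 0)
     \<and> (\<forall>x t. t \<ge> 0 \<longrightarrow> \<Phi> (t *\<^sub>R x) = t * \<Phi> x)
     \<and> (\<forall>x. \<Phi> x = 0 \<longleftrightarrow> x = 0)"

definition gsphere :: "('a::euclidean_space \<Rightarrow> real) \<Rightarrow> 'a set" where
  "gsphere \<Phi> = {x. \<Phi> x = 1}"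

definition grho :: "('a::euclidean_space \<Rightarrow> real) \<Rightarrow> 'a \<Rightarrow> 'a" where
  "grho \<Phi> x = (if x = 0 then 0 else (1 / \<Phi> x) *\<^sub>R x)"

definition s_comb :: "('a::euclidean_space \<Rightarrow> real) \<Rightarrow> real \<Rightarrow> 'a \<Rightarrow> 'a \<Rightarrow> 'a" where
  "s_comb \<Phi> l x y = grho \<Phi> (l *\<^sub>R x + (1 - l) *\<^sub>R y)"

definition s_convex :: "('a::euclidean_space \<Rightarrow> real) \<Rightarrow> 'a set \<Rightarrow> bool" where
  "s_convex \<Phi> S \<longleftrightarrow> S \<noteq> {} \<and> S \<subseteq> gsphere \<Phi> \<and>
     (\<forall>x\<in>S. \<forall>y\<in>S. \<forall>l\<in>{0..1}. s_comb \<Phi> l x y \<in> S)"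

definition hull_addible :: "('a::euclidean_space \<Rightarrow> real) \<Rightarrow> 'a set \<Rightarrow> bool" where
  "hull_addible \<Phi> S \<longleftrightarrow> S \<noteq> {} \<and> S \<subseteq> gsphere \<Phi> \<and> 0 \<notin> convex hull S"

definition sco :: "('a::euclidean_space \<Rightarrow> real) \<Rightarrow> 'a set \<Rightarrow> 'a set" where
  "sco \<Phi> S = grho \<Phi> ` (convex hull S)"

end

theory Submission
  imports Defs
begin

text \<open>The radial projection \<open>grho\<close> is invariant under positive scaling. Hence an s-combination of
\<open>grho k\<close> and \<open>grho k'\<close> is \<open>grho\<close> of a convex combination of \<open>k\<close> and \<open>k'\<close>, so \<open>sco S\<close> is s-convex;
conversely, for s-convex \<open>C\<close> the cone \<open>{x \<noteq> 0. grho x \<in> C}\<close> is convex, so \<open>sco S\<close> lies in every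
s-convex superset of \<open>S\<close>. Closure preserves s-convexity because the s-combination is continuous
away from the origin; this is where the half-space \<open>\<langle>x, u\<rangle> \<ge> \<alpha>\<close> enters: by convexity \<open>\<Phi> \<le> 1\<close> on
\<open>conv S\<close>, so \<open>grho\<close> only moves points of \<open>conv S\<close> further into the half-space, which keeps \<open>sco S\<close>
and its closure in a closed convex set avoiding the origin.\<close>

lemma gauge_fun_pos: "gauge_fun \<Phi> \<Longrightarrow> z \<noteq> 0 \<Longrightarrow> \<Phi> z > 0"
  unfolding gauge_fun_def by (metis less_eq_real_def)

lemma gauge_fun_scaleR: "gauge_fun \<Phi> \<Longrightarrow> t \<ge> 0 \<Longrightarrow> \<Phi> (t *\<^sub>R x) = t * \<Phi> x"
  unfolding gauge_fun_def by blast

lemma gauge_fun_continuous: "gauge_fun \<Phi> \<Longrightarrow> continuous_on UNIV \<Phi>"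
  unfolding gauge_fun_def by blast

lemma gauge_fun_zero: "gauge_fun \<Phi> \<Longrightarrow> \<Phi> 0 = 0"
  unfolding gauge_fun_def by blast

lemma zero_notin_gsphere: "gauge_fun \<Phi> \<Longrightarrow> 0 \<notin> gsphere \<Phi>"
  unfolding gsphere_def by (simp add: gauge_fun_zero)

lemma closed_gsphere: "gauge_fun \<Phi> \<Longrightarrow> closed (gsphere \<Phi>)"
  unfolding gsphere_def by (simp add: closed_Collect_eq gauge_fun_continuous)

lemma grho_scaleR_pos:
  assumes "gauge_fun \<Phi>" and "t > 0"
  shows "grho \<Phi> (t *\<^sub>R z) = grho \<Phi> z"
  using assms gauge_fun_scaleR[OF assms(1), of t z] unfolding grho_def by auto

lemma grho_in_gsphere:
  assumes g: "gauge_fun \<Phi>" and "z \<noteq> 0"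
  shows "grho \<Phi> z \<in> gsphere \<Phi>"
  using assms gauge_fun_pos[OF g \<open>z \<noteq> 0\<close>] gauge_fun_scaleR[OF g, of "1 / \<Phi> z" z]
  unfolding grho_def gsphere_def by simp

lemma grho_gsphere: "gauge_fun \<Phi> \<Longrightarrow> z \<in> gsphere \<Phi> \<Longrightarrow> grho \<Phi> z = z"
  using zero_notin_gsphere[of \<Phi>] unfolding grho_def gsphere_def by auto

lemma scaleR_grho: "gauge_fun \<Phi> \<Longrightarrow> z \<noteq> 0 \<Longrightarrow> \<Phi> z *\<^sub>R grho \<Phi> z = z"
  using gauge_fun_pos[of \<Phi> z] unfolding grho_def by simp

lemma continuous_on_grho:
  assumes g: "gauge_fun \<Phi>"
  shows "continuous_on (- {0}) (grho \<Phi>)"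
proof (rule continuous_on_eq)
  show "continuous_on (- {0}) (\<lambda>x. (1 / \<Phi> x) *\<^sub>R x)"
    using gauge_fun_continuous[OF g] gauge_fun_pos[OF g]
    by (intro continuous_intros) (auto intro: continuous_on_subset simp: less_imp_neq[symmetric])
qed (simp add: grho_def)

lemma conic_comb_eq_scaled_convex_comb:
  fixes x y :: "'a::real_vector"
  assumes "p + q \<noteq> 0"
  shows "p *\<^sub>R x + q *\<^sub>R y = (p + q) *\<^sub>R ((p / (p + q)) *\<^sub>R x + (1 - p / (p + q)) *\<^sub>R y)"
proof -
  have "1 - p / (p + q) = q / (p + q)" using assms by (simp add: field_simps)
  then show ?thesis using assms by (simp add: scaleR_add_right)
qed

lemma convex_comb_pos:
  fixes s t :: real
  assumes "s > 0" "t > 0" "0 \<le> a" "0 \<le> b" "a + b = 1"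
  shows "a * s + b * t > 0"
  using convex_bound_lt[of "-s" 0 "-t" a b] assms by simp

lemma grho_convex_hull_subset:
  assumes g: "gauge_fun \<Phi>" and C: "s_convex \<Phi> C" and "S \<subseteq> C"
  shows "grho \<Phi> ` (convex hull S) \<subseteq> C"
proof -
  define D where "D = {x. x \<noteq> 0 \<and> grho \<Phi> x \<in> C}"
  have C_sphere: "C \<subseteq> gsphere \<Phi>" using C unfolding s_convex_def by blast
  have "S \<subseteq> D"
    using \<open>S \<subseteq> C\<close> C_sphere grho_gsphere[OF g] zero_notin_gsphere[OF g]
    unfolding D_def by (auto simp: subset_iff)
  moreover have "convex D"
    unfolding convex_def
  proof (intro ballI allI impI)
    fix x y and a b :: real
    assume "x \<in> D" "y \<in> D" and ab: "0 \<le> a" "0 \<le> b" "a + b = 1"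
    then have x: "x \<noteq> 0" "grho \<Phi> x \<in> C" and y: "y \<noteq> 0" "grho \<Phi> y \<in> C"
      unfolding D_def by auto
    define p where "p = a * \<Phi> x"
    define q where "q = b * \<Phi> y"
    define w where "w = p / (p + q)"
    have pos: "\<Phi> x > 0" "\<Phi> y > 0" using gauge_fun_pos[OF g] x(1) y(1) by auto
    then have nonneg: "p \<ge> 0" "q \<ge> 0" using ab unfolding p_def q_def by auto
    have "p + q > 0" unfolding p_def q_def by (rule convex_comb_pos) (use ab pos in auto)
    then have w: "w \<in> {0..1}" using nonneg unfolding w_def by auto
    have "a *\<^sub>R x + b *\<^sub>R y = p *\<^sub>R grho \<Phi> x + q *\<^sub>R grho \<Phi> y"
      using scaleR_grho[OF g x(1)] scaleR_grho[OF g y(1)] unfolding p_def q_def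
      by (metis scaleR_scaleR)
    also have "\<dots> = (p + q) *\<^sub>R (w *\<^sub>R grho \<Phi> x + (1 - w) *\<^sub>R grho \<Phi> y)"
      unfolding w_def using \<open>p + q > 0\<close> by (intro conic_comb_eq_scaled_convex_comb) simp
    finally have eq: "a *\<^sub>R x + b *\<^sub>R y = (p + q) *\<^sub>R (w *\<^sub>R grho \<Phi> x + (1 - w) *\<^sub>R grho \<Phi> y)" .
    have comb: "s_comb \<Phi> w (grho \<Phi> x) (grho \<Phi> y) \<in> C"
      using C x y w unfolding s_convex_def by blast
    then have "w *\<^sub>R grho \<Phi> x + (1 - w) *\<^sub>R grho \<Phi> y \<noteq> 0"
      using C_sphere zero_notin_gsphere[OF g] unfolding s_comb_def grho_def by auto
    then show "a *\<^sub>R x + b *\<^sub>R y \<in> D"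
      using comb \<open>p + q > 0\<close> unfolding D_def eq s_comb_def grho_scaleR_pos[OF g \<open>p + q > 0\<close>]
      by (simp add: grho_scaleR_pos[OF g])
  qed
  ultimately have "convex hull S \<subseteq> D" by (rule hull_minimal)
  then show ?thesis unfolding D_def by auto
qed

lemma s_convex_sco:
  assumes g: "gauge_fun \<Phi>" and "hull_addible \<Phi> S"
  shows "s_convex \<Phi> (sco \<Phi> S)"
proof -
  define K where "K = convex hull S"
  have "S \<noteq> {}" and K0: "0 \<notin> K" using assms(2) unfolding hull_addible_def K_def by auto
  have "s_comb \<Phi> l (grho \<Phi> k) (grho \<Phi> k') \<in> grho \<Phi> ` K"
    if k: "k \<in> K" "k' \<in> K" and l: "l \<in> {0..1}" for k k' l
  proof -
    have "k \<noteq> 0" "k' \<noteq> 0" using k K0 by auto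
    then have pos: "\<Phi> k > 0" "\<Phi> k' > 0" using gauge_fun_pos[OF g] by auto
    define p where "p = l / \<Phi> k"
    define q where "q = (1 - l) / \<Phi> k'"
    define w where "w = p / (p + q)"
    have nonneg: "p \<ge> 0" "q \<ge> 0" using l pos unfolding p_def q_def by auto
    have "p + q = l * (1 / \<Phi> k) + (1 - l) * (1 / \<Phi> k')" unfolding p_def q_def by simp
    also have "\<dots> > 0" by (rule convex_comb_pos) (use l pos in auto)
    finally have "p + q > 0" .
    then have "w *\<^sub>R k + (1 - w) *\<^sub>R k' \<in> K"
      using k nonneg unfolding w_def K_def by (intro convexD) auto
    have comb_eq: "p *\<^sub>R k + q *\<^sub>R k' = (p + q) *\<^sub>R (w *\<^sub>R k + (1 - w) *\<^sub>R k')"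
      unfolding w_def using \<open>p + q > 0\<close> by (intro conic_comb_eq_scaled_convex_comb) simp
    have "s_comb \<Phi> l (grho \<Phi> k) (grho \<Phi> k') = grho \<Phi> (p *\<^sub>R k + q *\<^sub>R k')"
      using \<open>k \<noteq> 0\<close> \<open>k' \<noteq> 0\<close> unfolding s_comb_def p_def q_def grho_def by simp
    also have "\<dots> = grho \<Phi> ((p + q) *\<^sub>R (w *\<^sub>R k + (1 - w) *\<^sub>R k'))"
      by (simp only: comb_eq)
    also have "\<dots> = grho \<Phi> (w *\<^sub>R k + (1 - w) *\<^sub>R k')"
      using grho_scaleR_pos[OF g \<open>p + q > 0\<close>] .
    finally show ?thesis using \<open>w *\<^sub>R k + (1 - w) *\<^sub>R k' \<in> K\<close> by (rule image_eqI)
  qed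
  moreover have "grho \<Phi> ` K \<subseteq> gsphere \<Phi>"
    using K0 by (intro image_subsetI grho_in_gsphere[OF g]) blast
  moreover have "K \<noteq> {}" using \<open>S \<noteq> {}\<close> unfolding K_def by simp
  ultimately show ?thesis unfolding s_convex_def sco_def K_def[symmetric] by blast
qed

lemma s_convex_closure:
  assumes g: "gauge_fun \<Phi>" and A: "s_convex \<Phi> A"
    and H: "convex H" "closed H" "0 \<notin> H" "A \<subseteq> H"
  shows "s_convex \<Phi> (closure A)"
proof -
  have A_sphere: "closure A \<subseteq> gsphere \<Phi>"
    using A closed_gsphere[OF g] unfolding s_convex_def by (simp add: closure_minimal)
  have "s_comb \<Phi> l x y \<in> closure A" if "x \<in> closure A" "y \<in> closure A" "l \<in> {0..1}" for x y l
  proof -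
    let ?f = "\<lambda>z. s_comb \<Phi> l (fst z) (snd z)"
    have "continuous_on (H \<times> H) ?f"
      unfolding s_comb_def
    proof (rule continuous_on_compose2[OF continuous_on_grho[OF g]])
      have "l *\<^sub>R a + (1 - l) *\<^sub>R b \<in> H" if "a \<in> H" "b \<in> H" for a b
        using convexD[OF H(1) that] \<open>l \<in> {0..1}\<close> by auto
      then show "(\<lambda>z. l *\<^sub>R fst z + (1 - l) *\<^sub>R snd z) ` (H \<times> H) \<subseteq> - {0}"
        using H(3) by force
    qed (intro continuous_intros)
    moreover have "closure (A \<times> A) \<subseteq> H \<times> H"
      using closure_minimal[OF H(4,2)] by (auto simp: closure_Times)
    ultimately have "continuous_on (closure (A \<times> A)) ?f" by (rule continuous_on_subset)
    moreover have "?f ` (A \<times> A) \<subseteq> closure A"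
    proof (rule image_subsetI)
      fix z assume "z \<in> A \<times> A"
      then have "?f z \<in> A" using A \<open>l \<in> {0..1}\<close> unfolding s_convex_def by (auto simp: mem_Times_iff)
      then show "?f z \<in> closure A" using closure_subset ..
    qed
    ultimately have "?f ` closure (A \<times> A) \<subseteq> closure A"
      by (rule image_closure_subset[OF _ closed_closure])
    moreover have "(x, y) \<in> closure (A \<times> A)" using that(1,2) by (simp add: closure_Times)
    ultimately have "?f (x, y) \<in> closure A" by blast
    then show ?thesis by simp
  qed
  then show ?thesis using A A_sphere unfolding s_convex_def by auto
qed

lemma gauge_le_1_convex_hull:
  assumes "convex_on UNIV \<Phi>" and "S \<subseteq> gsphere \<Phi>" and "x \<in> convex hull S"
  shows "\<Phi> x \<le> 1"
proof -
  have "\<forall>x\<in>S. \<Phi> x \<le> 1" using assms(2) unfolding gsphere_def by auto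
  then show ?thesis
    using convex_on_convex_hull_bound[OF convex_on_subset[OF assms(1)]] assms(3) by blast
qed

lemma grho_in_halfspace:
  assumes g: "gauge_fun \<Phi>" and "\<alpha> > 0" and x: "inner u x \<ge> \<alpha>" "\<Phi> x \<le> 1"
  shows "inner u (grho \<Phi> x) \<ge> \<alpha>"
proof -
  have "x \<noteq> 0" using x \<open>\<alpha> > 0\<close> by auto
  then have "\<Phi> x > 0" using gauge_fun_pos[OF g] by blast
  have "inner u x \<le> inner u x / \<Phi> x"
    using \<open>\<Phi> x > 0\<close> x \<open>\<alpha> > 0\<close> by (simp add: le_divide_eq mult_left_le)
  then show ?thesis using x \<open>x \<noteq> 0\<close> unfolding grho_def by simp
qed

lemma sco_subset_halfspace:
  assumes g: "gauge_fun \<Phi>" and "convex_on UNIV \<Phi>" and "\<alpha> > 0"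
    and S: "S \<subseteq> gsphere \<Phi>" "S \<subseteq> {x. inner u x \<ge> \<alpha>}"
  shows "sco \<Phi> S \<subseteq> {x. inner u x \<ge> \<alpha>}"
proof
  fix y assume "y \<in> sco \<Phi> S"
  then obtain x where x: "x \<in> convex hull S" "y = grho \<Phi> x" unfolding sco_def by blast
  have "convex hull S \<subseteq> {x. inner u x \<ge> \<alpha>}"
    using S(2) by (rule hull_minimal) (rule convex_halfspace_ge)
  then have "inner u x \<ge> \<alpha>" using x(1) by blast
  then show "y \<in> {x. inner u x \<ge> \<alpha>}"
    using grho_in_halfspace[OF g \<open>\<alpha> > 0\<close>] gauge_le_1_convex_hull[OF assms(2) S(1) x(1)]
    unfolding x(2) by simp
qed

lemma subset_sco:
  assumes "gauge_fun \<Phi>" and "S \<subseteq> gsphere \<Phi>"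
  shows "S \<subseteq> sco \<Phi> S"
proof
  fix s assume "s \<in> S"
  then have "s = grho \<Phi> s" "s \<in> convex hull S"
    using grho_gsphere[OF assms(1)] assms(2) by (auto simp: hull_inc)
  then show "s \<in> sco \<Phi> S" unfolding sco_def by blast
qed

theorem mainTheorem8:
  fixes \<Phi> :: "'a::euclidean_space \<Rightarrow> real" and S :: "'a set" and u :: 'a and \<alpha> :: real
  assumes "DIM('a) \<ge> 2"
    and "gauge_fun \<Phi>"
    and "convex_on UNIV \<Phi>"
    and "S \<noteq> {}"
    and "S \<subseteq> gsphere \<Phi> \<inter> {x. inner x u \<ge> \<alpha>}"
    and "norm u = 1" and "\<alpha> > 0"
  shows "hull_addible \<Phi> S
    \<and> closure (sco \<Phi> S) = \<Inter> {C. C \<subseteq> gsphere \<Phi> \<and> C \<noteq> {} \<and> closed C \<and> s_convex \<Phi> C \<and> S \<subseteq> C}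
    \<and> closed (closure (sco \<Phi> S)) \<and> s_convex \<Phi> (closure (sco \<Phi> S))
    \<and> S \<subseteq> closure (sco \<Phi> S)
    \<and> (\<forall>C. C \<subseteq> gsphere \<Phi> \<and> closed C \<and> s_convex \<Phi> C \<and> S \<subseteq> C \<longrightarrow> closure (sco \<Phi> S) \<subseteq> C)"
proof -
  note g = assms(2)
  define H where "H = {x. inner u x \<ge> \<alpha>}"
  have S: "S \<subseteq> gsphere \<Phi>" "S \<subseteq> H" using assms(5) by (auto simp: H_def inner_commute)
  have "convex H" "closed H" "0 \<notin> H"
    using \<open>\<alpha> > 0\<close> unfolding H_def by (auto intro: convex_halfspace_ge closed_halfspace_ge)
  have "convex hull S \<subseteq> H" using S(2) \<open>convex H\<close> by (rule hull_minimal)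
  then have addible: "hull_addible \<Phi> S"
    using assms(4) S(1) \<open>0 \<notin> H\<close> unfolding hull_addible_def by auto
  have "sco \<Phi> S \<subseteq> H" using sco_subset_halfspace[OF g assms(3,7) S[unfolded H_def]] unfolding H_def .
  with \<open>convex H\<close> \<open>closed H\<close> \<open>0 \<notin> H\<close> have sconv: "s_convex \<Phi> (closure (sco \<Phi> S))"
    by (intro s_convex_closure[OF g s_convex_sco[OF g addible]])
  have S_sub: "S \<subseteq> closure (sco \<Phi> S)" using subset_sco[OF g S(1)] closure_subset by blast
  have least: "closure (sco \<Phi> S) \<subseteq> C" if "closed C" "s_convex \<Phi> C" "S \<subseteq> C" for C
    using grho_convex_hull_subset[OF g that(2,3)] that(1) unfolding sco_def by (rule closure_minimal)
  have "closure (sco \<Phi> S) \<in> {C. C \<subseteq> gsphere \<Phi> \<and> C \<noteq> {} \<and> closed C \<and> s_convex \<Phi> C \<and> S \<subseteq> C}"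
    using sconv S_sub unfolding s_convex_def by auto
  then have "closure (sco \<Phi> S) = \<Inter> {C. C \<subseteq> gsphere \<Phi> \<and> C \<noteq> {} \<and> closed C \<and> s_convex \<Phi> C \<and> S \<subseteq> C}"
    using least by (blast intro: Inter_lower)
  then show ?thesis using addible sconv S_sub least by auto
qed

end
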